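(* Let $d\ge 1$, $n\ge 2$, and let $x_1,\dots,x_n,y$ be independent with $x_i\sim N_d(\mu,\eta^{-1}I_d)$ and $y\sim N_d(\mu,\eta^{-1}I_d)$, where $\mu\in\mathbb{R}^d$ and $\eta=1/\sigma^2>0$ are unknown. Put $\bar x_n=n^{-1}\sum_{i=1}^n x_i$, $s_n=\sum_{i=1}^n\|x_i-\bar x_n\|^2$, $\bar x_{n+1}=(n\bar x_n+y)/(n+1)$ and $s_{n+1}=s_n+n\|y-\bar x_n\|^2/(n+1)$. For a prior $\pi(\mu,\eta)$ and $l\in\{n,n+1\}$, $z\in\mathbb{R}^d$, $v>0$, define $$m_\pi(z,v;l)=\int_0^\infty\!\!\int_{\mathbb{R}^d}\phi(z;\mu,l^{-1}\eta^{-1})\,\eta\,\gamma\{\eta v;(l-1)d\}\,\pi(\mu,\eta)\,d\mu\,d\eta,\qquad \rho_\pi(z,v;l)=v\,m_\pi(z,v;l).$$ Then for any prior $\pi(\mu,\eta)$ the Bayesian predictive density satisfies $$\hat p_\pi(y\mid \bar x_n,s_n)=\frac{\rho_\pi(\bar x_{n+1},s_{n+1};n+1)}{\rho_\pi(\bar x_n,s_n;n)}\,\hat p_R(y\mid\bar x_n,s_n),$$ and, provided the expectations exist, $$R_{KL}\{(\mu,\eta),\hat p_R\}-R_{KL}\{(\mu,\eta),\hat p_\pi\}=E_{(\mu,\eta)}\left\{\log\frac{\rho_\pi(\bar x_{n+1},s_{n+1};n+1)}{\rho_\pi(\bar x_n,s_n;n)}\right\}.$$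
   Context: $\phi(\cdot;\theta,\tau)$ denotes the density of $N_d(\theta,\tau I_d)$; $\gamma(\cdot;k)$ denotes the chi-square density with $k$ degrees of freedom (so $\eta\gamma(\eta v;k)$ is the density of $v\sim\eta^{-1}\chi^2_{k}$). A prior $\pi(\mu,\eta)$ is a nonnegative (possibly improper) density on $\mathbb{R}^d\times(0,\infty)$ with respect to $d\mu\,d\eta$. The Bayesian predictive density with respect to $\pi$ is $$\hat p_\pi(y\mid\bar x_n,s_n)=\frac{\iint \phi(y;\mu,\eta^{-1})\,\phi(\bar x_n;\mu,n^{-1}\eta^{-1})\,\eta\,\gamma\{\eta s_n;(n-1)d\}\,\pi(\mu,\eta)\,d\mu\,d\eta}{\iint \phi(\bar x_n;\mu,n^{-1}\eta^{-1})\,\eta\,\gamma\{\eta s_n;(n-1)d\}\,\pi(\mu,\eta)\,d\mu\,d\eta}.$$ The best equivariant predictive density is $$\hat p_R(y\mid\bar x_n,s_n)=\frac{\Gamma(nd/2)}{\Gamma\{(n-1)d/2\}}\left(\frac{1}{\pi s_n}\frac{n}{n+1}\right)^{d/2}\left(1+\frac{1}{s_n}\frac{n}{n+1}\|y-\bar x_n\|^2\right)^{-nd/2}.$$ The Kullback--Leibler risk of a predictive density $\hat p(y\mid\bar x_n,s_n)$ is $R_{KL}\{(\mu,\eta),\hat p\}=E_{(\mu,\eta)}\left[\log\{\phi(y;\mu,\eta^{-1})/\hat p(y\mid\bar x_n,s_n)\}\right]$, where $E_{(\mu,\eta)}$ denotes expectation with respect to $(y,\bar x_n,s_n)$ under the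 model above. *)

theory Defs
  imports "HOL-Probability.Probability"
begin

definition phi :: "real^'d \<Rightarrow> real^'d \<Rightarrow> real \<Rightarrow> real" where
  "phi y theta tau = (2 * pi * tau) powr (- real CARD('d) / 2)
      * exp (- (norm (y - theta))\<^sup>2 / (2 * tau))"

definition chisq :: "nat \<Rightarrow> real \<Rightarrow> real" where
  "chisq k v = (if v > 0 then v powr (real k / 2 - 1) * exp (- v / 2)
                 / (2 powr (real k / 2) * Gamma (real k / 2)) else 0)"

definition m_pi :: "(real^'d \<Rightarrow> real \<Rightarrow> real) \<Rightarrow> real^'d \<Rightarrow> real \<Rightarrow> nat \<Rightarrow> real" where
  "m_pi prior z v l = (\<integral>p. indicator {0<..} (snd p) *
      phi z (fst p) (1 / (real l * snd p)) * snd p *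
      chisq ((l - 1) * CARD('d)) (snd p * v) * prior (fst p) (snd p)
      \<partial>(lborel :: ((real^'d) \<times> real) measure))"

definition rho_pi :: "(real^'d \<Rightarrow> real \<Rightarrow> real) \<Rightarrow> real^'d \<Rightarrow> real \<Rightarrow> nat \<Rightarrow> real" where
  "rho_pi prior z v l = v * m_pi prior z v l"

definition pred_bayes :: "(real^'d \<Rightarrow> real \<Rightarrow> real) \<Rightarrow> nat \<Rightarrow> real^'d \<Rightarrow> real^'d \<Rightarrow> real \<Rightarrow> real" where
  "pred_bayes prior n y xb s =
     (\<integral>p. indicator {0<..} (snd p) * phi y (fst p) (1 / snd p) *
        phi xb (fst p) (1 / (real n * snd p)) * snd p *
        chisq ((n - 1) * CARD('d)) (snd p * s) * prior (fst p) (snd p)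
        \<partial>(lborel :: ((real^'d) \<times> real) measure))
   / (\<integral>p. indicator {0<..} (snd p) *
        phi xb (fst p) (1 / (real n * snd p)) * snd p *
        chisq ((n - 1) * CARD('d)) (snd p * s) * prior (fst p) (snd p)
        \<partial>(lborel :: ((real^'d) \<times> real) measure))"

text \<open>Best equivariant predictive density p_R(y | xb, s).\<close>
definition pred_R :: "nat \<Rightarrow> real^'d \<Rightarrow> real^'d \<Rightarrow> real \<Rightarrow> real" where
  "pred_R n y xb s =
     Gamma (real (n * CARD('d)) / 2) / Gamma (real ((n - 1) * CARD('d)) / 2)
     * (1 / (pi * s) * (real n / (real n + 1))) powr (real CARD('d) / 2)
     * (1 + 1 / s * (real n / (real n + 1)) * (norm (y - xb))\<^sup>2)
         powr (- real (n * CARD('d)) / 2)"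

definition xbar :: "nat \<Rightarrow> (nat \<Rightarrow> real^'d) \<Rightarrow> real^'d" where
  "xbar n xs = (1 / real n) *\<^sub>R (\<Sum>i<n. xs i)"

definition ssum :: "nat \<Rightarrow> (nat \<Rightarrow> real^'d) \<Rightarrow> real" where
  "ssum n xs = (\<Sum>i<n. (norm (xs i - xbar n xs))\<^sup>2)"

definition xbar_next :: "nat \<Rightarrow> real^'d \<Rightarrow> real^'d \<Rightarrow> real^'d" where
  "xbar_next n xb y = (1 / (real n + 1)) *\<^sub>R (real n *\<^sub>R xb + y)"

definition s_next :: "nat \<Rightarrow> real^'d \<Rightarrow> real \<Rightarrow> real^'d \<Rightarrow> real" where
  "s_next n xb s y = s + real n * (norm (y - xb))\<^sup>2 / (real n + 1)"

definition normal_vec :: "real^'d \<Rightarrow> real \<Rightarrow> (real^'d) measure" where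
  "normal_vec mu tau = density lborel (\<lambda>x. ennreal (phi x mu tau))"

definition model :: "nat \<Rightarrow> real^'d \<Rightarrow> real \<Rightarrow> ((nat \<Rightarrow> real^'d) \<times> (real^'d)) measure" where
  "model n mu eta = (PiM {..<n} (\<lambda>_. normal_vec mu (1 / eta))) \<Otimes>\<^sub>M normal_vec mu (1 / eta)"

definition R_KL :: "nat \<Rightarrow> real^'d \<Rightarrow> real \<Rightarrow> (real^'d \<Rightarrow> real^'d \<Rightarrow> real \<Rightarrow> real) \<Rightarrow> real" where
  "R_KL n mu eta p = (\<integral>w. ln (phi (snd w) mu (1 / eta) / p (snd w) (xbar n (fst w)) (ssum n (fst w)))
                        \<partial>model n mu eta)"

end

theory Submission
  imports Defs
begin

(*
  Completing the square in mu factorises the likelihood of (y, xb):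
    phi(y; mu, 1/eta) phi(xb; mu, 1/(n eta)) = phi(xb'; mu, 1/((n+1) eta)) phi(y; xb, (n+1)/(n eta)).
  The Gaussian factor in y then merges with the chi-square density of eta s on (n-1)d degrees of
  freedom into (s'/s) p_R(y | xb, s) times the chi-square density of eta s' on nd degrees of freedom.
  Hence the posterior integrand at (y, xb, s) is (s'/s) p_R times the one defining m_pi(xb', s'; n+1),
  which gives the first identity; the second follows by taking logarithms inside the KL risks.
*)

lemma norm_sq_split_weighted_mean:
  fixes x y m :: "'a::real_inner" and c :: real
  assumes "c \<ge> 0"
  shows "(norm (y - m))\<^sup>2 + c * (norm (x - m))\<^sup>2
       = (c + 1) * (norm ((1 / (c + 1)) *\<^sub>R (c *\<^sub>R x + y) - m))\<^sup>2 + c / (c + 1) * (norm (y - x))\<^sup>2"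
proof -
  define a b where "a = y - m" and "b = x - m"
  have c1: "c + 1 > 0" using assms by simp
  have mean: "(1 / (c + 1)) *\<^sub>R (c *\<^sub>R x + y) - m = (1 / (c + 1)) *\<^sub>R (c *\<^sub>R b + a)"
    using c1 unfolding a_def b_def by (simp add: algebra_simps divide_simps scaleR_add_left[symmetric])
  have diff: "y - x = a - b" unfolding a_def b_def by simp
  have scaled: "(norm ((1 / (c + 1)) *\<^sub>R (c *\<^sub>R b + a)))\<^sup>2 = (norm (c *\<^sub>R b + a))\<^sup>2 / (c + 1)\<^sup>2"
    using c1 by (simp add: power_divide)
  have "(c + 1) * ((norm a)\<^sup>2 + c * (norm b)\<^sup>2) = (norm (c *\<^sub>R b + a))\<^sup>2 + c * (norm (a - b))\<^sup>2"
    unfolding power2_norm_eq_inner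
    by (simp add: inner_add_left inner_add_right inner_diff_left inner_diff_right inner_commute algebra_simps)
  then have "(norm a)\<^sup>2 + c * (norm b)\<^sup>2 = ((norm (c *\<^sub>R b + a))\<^sup>2 + c * (norm (a - b))\<^sup>2) / (c + 1)"
    using c1 by (simp add: field_simps)
  also have "\<dots> = (c + 1) * ((norm (c *\<^sub>R b + a))\<^sup>2 / (c + 1)\<^sup>2) + c / (c + 1) * (norm (a - b))\<^sup>2"
    using c1 by (simp add: add_divide_distrib power2_eq_square)
  finally show ?thesis
    unfolding mean diff scaled a_def[symmetric] b_def[symmetric] .
qed

lemma phi_pos: "tau > 0 \<Longrightarrow> phi y mu tau > 0"
  unfolding phi_def by simp

lemma phi_mult_phi:
  fixes x y m m' :: "real^'d"
  assumes "a > 0" and "b > 0"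
  shows "phi y m a * phi x m' b = (4 * pi\<^sup>2 * a * b) powr (- real CARD('d) / 2)
           * exp (- (norm (y - m))\<^sup>2 / (2 * a) - (norm (x - m'))\<^sup>2 / (2 * b))"
proof -
  have "(2 * pi * a) powr (- real CARD('d) / 2) * (2 * pi * b) powr (- real CARD('d) / 2)
      = (4 * pi\<^sup>2 * a * b) powr (- real CARD('d) / 2)"
    using assms by (simp add: powr_mult[symmetric] power2_eq_square mult_ac)
  then show ?thesis
    unfolding phi_def by (simp add: exp_diff exp_minus field_simps)
qed

lemma phi_mult_phi_xbar_next:
  fixes x y mu :: "real^'d" and n :: nat and eta :: real
  assumes "n \<ge> 1" and eta: "eta > 0"
  shows "phi y mu (1 / eta) * phi x mu (1 / (real n * eta))
       = phi (xbar_next n x y) mu (1 / ((real n + 1) * eta)) * phi y x ((real n + 1) / (real n * eta))"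
proof -
  define N where "N = real n"
  have N: "N \<ge> 1" using assms(1) unfolding N_def by simp
  have split: "(norm (y - mu))\<^sup>2 + N * (norm (x - mu))\<^sup>2
      = (N + 1) * (norm (xbar_next n x y - mu))\<^sup>2 + N / (N + 1) * (norm (y - x))\<^sup>2"
    using norm_sq_split_weighted_mean[where c=N and x=x and y=y and m=mu] N
    unfolding xbar_next_def N_def by simp
  have "phi y mu (1 / eta) * phi x mu (1 / (N * eta))
      = (4 * pi\<^sup>2 * (1 / eta) * (1 / (N * eta))) powr (- real CARD('d) / 2)
        * exp (- (norm (y - mu))\<^sup>2 / (2 * (1 / eta)) - (norm (x - mu))\<^sup>2 / (2 * (1 / (N * eta))))"
    using N eta by (simp add: phi_mult_phi)
  also have "\<dots> = (4 * pi\<^sup>2 * (1 / ((N + 1) * eta)) * ((N + 1) / (N * eta))) powr (- real CARD('d) / 2)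
        * exp (- (norm (xbar_next n x y - mu))\<^sup>2 / (2 * (1 / ((N + 1) * eta)))
               - (norm (y - x))\<^sup>2 / (2 * ((N + 1) / (N * eta))))"
  proof -
    have "4 * pi\<^sup>2 * (1 / eta) * (1 / (N * eta)) = 4 * pi\<^sup>2 * (1 / ((N + 1) * eta)) * ((N + 1) / (N * eta))"
      using N eta by simp
    moreover have "- (norm (y - mu))\<^sup>2 / (2 * (1 / eta)) - (norm (x - mu))\<^sup>2 / (2 * (1 / (N * eta)))
        = - eta / 2 * ((norm (y - mu))\<^sup>2 + N * (norm (x - mu))\<^sup>2)"
      by (simp add: field_simps)
    moreover have "\<dots> = - (norm (xbar_next n x y - mu))\<^sup>2 / (2 * (1 / ((N + 1) * eta)))
               - (norm (y - x))\<^sup>2 / (2 * ((N + 1) / (N * eta)))"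
      unfolding split using N eta by (simp add: field_simps)
    ultimately show ?thesis by simp
  qed
  also have "\<dots> = phi (xbar_next n x y) mu (1 / ((N + 1) * eta)) * phi y x ((N + 1) / (N * eta))"
    using N eta by (simp add: phi_mult_phi)
  finally show ?thesis unfolding N_def .
qed

lemma gaussian_chisq_factor_identity:
  fixes eta s t q N D Gk Gn :: real
  assumes "eta > 0" "s > 0" "q \<ge> 0" "N \<ge> 1" "D > 0" "Gk > 0" "Gn > 0"
    and t: "t = s + N * q / (N + 1)"
  shows "(2 * pi * ((N + 1) / (N * eta))) powr (- D / 2) * exp (- q / (2 * ((N + 1) / (N * eta))))
           * (eta * ((eta * s) powr ((N - 1) * D / 2 - 1) * exp (- (eta * s) / 2)
                     / (2 powr ((N - 1) * D / 2) * Gk)))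
       = t / s * (Gn / Gk * (1 / (pi * s) * (N / (N + 1))) powr (D / 2)
                  * (1 + 1 / s * (N / (N + 1)) * q) powr (- (N * D) / 2))
           * (eta * ((eta * t) powr (N * D / 2 - 1) * exp (- (eta * t) / 2) / (2 powr (N * D / 2) * Gn)))"
proof -
  have "t > 0" using assms by (simp add: add_pos_nonneg)
  moreover have "1 + 1 / s * (N / (N + 1)) * q = t / s"
    using assms by (simp add: add_divide_distrib)
  ultimately show ?thesis
    using assms pi_gt_zero
    apply (subst ln_inj_iff[symmetric])
      apply (simp_all add: ln_mult ln_div ln_powr)
    by (simp add: field_simps)
qed

lemma phi_mult_chisq_eq_pred_R_mult_chisq:
  fixes x y :: "real^'d" and n :: nat and eta s :: real
  assumes n: "n \<ge> 2" and eta: "eta > 0" and s: "s > 0"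
  shows "phi y x ((real n + 1) / (real n * eta)) * (eta * chisq ((n - 1) * CARD('d)) (eta * s))
       = s_next n x s y / s * pred_R n y x s * (eta * chisq (n * CARD('d)) (eta * s_next n x s y))"
proof -
  define N D q t where "N = real n" and "D = real CARD('d)" and "q = (norm (y - x))\<^sup>2"
    and "t = s_next n x s y"
  have N: "N \<ge> 1" using n unfolding N_def by simp
  have D: "D > 0" unfolding D_def by simp
  have t_eq: "t = s + N * q / (N + 1)" unfolding t_def s_next_def N_def q_def by simp
  have "t > 0" unfolding t_eq using s N by (simp add: q_def add_pos_nonneg)
  have K: "real ((n - 1) * CARD('d)) = (N - 1) * D" using n unfolding N_def D_def by (simp add: of_nat_diff)
  have M: "real (n * CARD('d)) = N * D" unfolding N_def D_def by simp
  have Gk: "Gamma ((N - 1) * D / 2) > 0" using n D unfolding N_def by (intro Gamma_real_pos) simp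
  have Gn: "Gamma (N * D / 2) > 0" using N D by (intro Gamma_real_pos) simp
  have "phi y x ((N + 1) / (N * eta))
      = (2 * pi * ((N + 1) / (N * eta))) powr (- D / 2) * exp (- q / (2 * ((N + 1) / (N * eta))))"
    unfolding phi_def D_def q_def ..
  moreover have "chisq ((n - 1) * CARD('d)) (eta * s)
      = (eta * s) powr ((N - 1) * D / 2 - 1) * exp (- (eta * s) / 2) / (2 powr ((N - 1) * D / 2) * Gamma ((N - 1) * D / 2))"
    unfolding chisq_def K using eta s by simp
  moreover have "chisq (n * CARD('d)) (eta * t)
      = (eta * t) powr (N * D / 2 - 1) * exp (- (eta * t) / 2) / (2 powr (N * D / 2) * Gamma (N * D / 2))"
    unfolding chisq_def M using eta \<open>t > 0\<close> by simp
  moreover have "pred_R n y x s = Gamma (N * D / 2) / Gamma ((N - 1) * D / 2)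
      * (1 / (pi * s) * (N / (N + 1))) powr (D / 2) * (1 + 1 / s * (N / (N + 1)) * q) powr (- (N * D) / 2)"
    unfolding pred_R_def K M N_def D_def q_def by simp
  ultimately show ?thesis
    unfolding N_def[symmetric] t_def[symmetric]
    using gaussian_chisq_factor_identity[OF eta s _ N D Gk Gn t_eq] by (simp add: q_def)
qed

lemma pred_R_pos:
  fixes y xb :: "real^'d"
  assumes n: "n \<ge> 2" and s: "s > 0"
  shows "pred_R n y xb s > 0"
proof -
  have "Gamma (real (n * CARD('d)) / 2) > 0" "Gamma (real ((n - 1) * CARD('d)) / 2) > 0"
    using n by (auto intro!: Gamma_real_pos)
  moreover have "1 + 1 / s * (real n / (real n + 1)) * (norm (y - xb))\<^sup>2 > 0"
    using s by (intro add_pos_nonneg) auto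
  ultimately show ?thesis
    unfolding pred_R_def using s n by simp
qed

definition rho_ratio :: "(real^'d \<Rightarrow> real \<Rightarrow> real) \<Rightarrow> nat \<Rightarrow> real^'d \<Rightarrow> real \<Rightarrow> real^'d \<Rightarrow> real" where
  "rho_ratio prior n xb s y
     = rho_pi prior (xbar_next n xb y) (s_next n xb s y) (n + 1) / rho_pi prior xb s n"

lemma pred_bayes_eq_rho_ratio_mult_pred_R:
  fixes prior :: "real^'d \<Rightarrow> real \<Rightarrow> real" and xb y :: "real^'d"
  assumes n: "n \<ge> 2" and "s \<ge> 0"
  shows "pred_bayes prior n y xb s = rho_ratio prior n xb s y * pred_R n y xb s"
proof (cases "s = 0")
  case True
  \<comment> \<open>chisq vanishes at 0, so both sides are divisions by 0.\<close>
  then show ?thesis by (simp add: pred_bayes_def rho_ratio_def rho_pi_def chisq_def)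
next
  case False
  with \<open>s \<ge> 0\<close> have s: "s > 0" by simp
  define t where "t = s_next n xb s y"
  define F where "F = t / s * pred_R n y xb s"
  have integrand: "indicator {0<..} eta * phi y mu (1 / eta) * phi xb mu (1 / (real n * eta)) * eta
        * chisq ((n - 1) * CARD('d)) (eta * s) * prior mu eta
      = F * (indicator {0<..} eta * phi (xbar_next n xb y) mu (1 / (real (n + 1) * eta)) * eta
        * chisq ((n + 1 - 1) * CARD('d)) (eta * t) * prior mu eta)" for mu eta
  proof (cases "eta > 0")
    case True
    have "phi y mu (1 / eta) * phi xb mu (1 / (real n * eta)) * (eta * chisq ((n - 1) * CARD('d)) (eta * s))
        = phi (xbar_next n xb y) mu (1 / ((real n + 1) * eta))
          * (phi y xb ((real n + 1) / (real n * eta)) * (eta * chisq ((n - 1) * CARD('d)) (eta * s)))"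
      using n True by (simp only: phi_mult_phi_xbar_next mult.assoc)
    also have "\<dots> = phi (xbar_next n xb y) mu (1 / ((real n + 1) * eta)) * (F * (eta * chisq (n * CARD('d)) (eta * t)))"
      unfolding F_def t_def using n True s by (simp only: phi_mult_chisq_eq_pred_R_mult_chisq)
    finally have "phi y mu (1 / eta) * phi xb mu (1 / (real n * eta)) * (eta * chisq ((n - 1) * CARD('d)) (eta * s))
        = phi (xbar_next n xb y) mu (1 / ((real n + 1) * eta)) * (F * (eta * chisq (n * CARD('d)) (eta * t)))" .
    then show ?thesis using True by (simp add: ac_simps)
  qed simp
  have "pred_bayes prior n y xb s = F * m_pi prior (xbar_next n xb y) t (n + 1) / m_pi prior xb s n"
    unfolding pred_bayes_def m_pi_def integrand by simp
  then show ?thesis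
    unfolding rho_ratio_def rho_pi_def F_def t_def by (simp add: field_simps)
qed

lemma ln_ratio_pred_R_pred_bayes:
  fixes prior :: "real^'d \<Rightarrow> real \<Rightarrow> real" and xb y :: "real^'d"
  assumes n: "n \<ge> 2" and "s \<ge> 0" and "p > 0" and r: "rho_ratio prior n xb s y > 0"
  shows "ln (p / pred_R n y xb s) - ln (p / pred_bayes prior n y xb s) = ln (rho_ratio prior n xb s y)"
proof -
  have "s \<noteq> 0" using r by (auto simp: rho_ratio_def rho_pi_def)
  with \<open>s \<ge> 0\<close> have "pred_R n y xb s > 0" using n by (simp add: pred_R_pos)
  then show ?thesis
    unfolding pred_bayes_eq_rho_ratio_mult_pred_R[OF n \<open>s \<ge> 0\<close>]
    using \<open>p > 0\<close> r by (simp add: ln_div ln_mult)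
qed

lemma ssum_nonneg: "ssum n xs \<ge> 0"
  unfolding ssum_def by (simp add: sum_nonneg)

lemma R_KL_pred_R_minus_R_KL_pred_bayes:
  fixes prior :: "real^'d \<Rightarrow> real \<Rightarrow> real" and mu :: "real^'d"
  assumes n: "n \<ge> 2" and eta: "eta > 0"
    and int_R: "integrable (model n mu eta)
      (\<lambda>w. ln (phi (snd w) mu (1 / eta) / pred_R n (snd w) (xbar n (fst w)) (ssum n (fst w))))"
    and int_bayes: "integrable (model n mu eta)
      (\<lambda>w. ln (phi (snd w) mu (1 / eta) / pred_bayes prior n (snd w) (xbar n (fst w)) (ssum n (fst w))))"
    and int_ratio: "integrable (model n mu eta)
      (\<lambda>w. ln (rho_ratio prior n (xbar n (fst w)) (ssum n (fst w)) (snd w)))"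
    and ratio_pos: "AE w in model n mu eta. rho_ratio prior n (xbar n (fst w)) (ssum n (fst w)) (snd w) > 0"
  shows "R_KL n mu eta (pred_R n) - R_KL n mu eta (pred_bayes prior n)
       = (\<integral>w. ln (rho_ratio prior n (xbar n (fst w)) (ssum n (fst w)) (snd w)) \<partial>model n mu eta)"
proof -
  have "R_KL n mu eta (pred_R n) - R_KL n mu eta (pred_bayes prior n)
      = (\<integral>w. ln (phi (snd w) mu (1 / eta) / pred_R n (snd w) (xbar n (fst w)) (ssum n (fst w)))
           - ln (phi (snd w) mu (1 / eta) / pred_bayes prior n (snd w) (xbar n (fst w)) (ssum n (fst w)))
         \<partial>model n mu eta)"
    unfolding R_KL_def using int_R int_bayes by simp
  also have "\<dots> = (\<integral>w. ln (rho_ratio prior n (xbar n (fst w)) (ssum n (fst w)) (snd w)) \<partial>model n mu eta)"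
    using int_R int_bayes int_ratio ratio_pos n eta
    by (intro integral_cong_AE) (auto elim!: AE_mp intro!: ln_ratio_pred_R_pred_bayes ssum_nonneg phi_pos)
  finally show ?thesis .
qed

theorem theorem1:
  fixes prior :: "real^'d \<Rightarrow> real \<Rightarrow> real" and n :: nat
  assumes n2: "n \<ge> 2"
    and prior_nonneg: "\<And>mu eta. prior mu eta \<ge> 0"
    and prior_meas: "(\<lambda>p. prior (fst p) (snd p)) \<in> borel_measurable (lborel :: ((real^'d) \<times> real) measure)"
  shows "(\<forall>(xs :: nat \<Rightarrow> real^'d) y.
            pred_bayes prior n y (xbar n xs) (ssum n xs)
            = rho_pi prior (xbar_next n (xbar n xs) y) (s_next n (xbar n xs) (ssum n xs) y) (n + 1)
              / rho_pi prior (xbar n xs) (ssum n xs) n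
              * pred_R n y (xbar n xs) (ssum n xs))
      \<and> (\<forall>(mu :: real^'d) (eta :: real).
           eta > 0
           \<longrightarrow> integrable (model n mu eta)
                 (\<lambda>w. ln (phi (snd w) mu (1 / eta) / pred_R n (snd w) (xbar n (fst w)) (ssum n (fst w))))
           \<longrightarrow> integrable (model n mu eta)
                 (\<lambda>w. ln (phi (snd w) mu (1 / eta) / pred_bayes prior n (snd w) (xbar n (fst w)) (ssum n (fst w))))
           \<longrightarrow> integrable (model n mu eta)
                 (\<lambda>w. ln (rho_pi prior (xbar_next n (xbar n (fst w)) (snd w))
                                 (s_next n (xbar n (fst w)) (ssum n (fst w)) (snd w)) (n + 1)
                          / rho_pi prior (xbar n (fst w)) (ssum n (fst w)) n))
           \<longrightarrow> (AE w in model n mu eta.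
                  rho_pi prior (xbar_next n (xbar n (fst w)) (snd w))
                         (s_next n (xbar n (fst w)) (ssum n (fst w)) (snd w)) (n + 1)
                  / rho_pi prior (xbar n (fst w)) (ssum n (fst w)) n > 0)
           \<longrightarrow> R_KL n mu eta (pred_R n) - R_KL n mu eta (pred_bayes prior n)
               = (\<integral>w. ln (rho_pi prior (xbar_next n (xbar n (fst w)) (snd w))
                                 (s_next n (xbar n (fst w)) (ssum n (fst w)) (snd w)) (n + 1)
                          / rho_pi prior (xbar n (fst w)) (ssum n (fst w)) n)
                   \<partial>model n mu eta))"
  using pred_bayes_eq_rho_ratio_mult_pred_R[OF n2 ssum_nonneg, unfolded rho_ratio_def]
    R_KL_pred_R_minus_R_KL_pred_bayes[OF n2, unfolded rho_ratio_def]
  by blast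

end
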